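(* Let $G=(X,E)$ be a finite connected graph, $x,y,z$ three distinct vertices, $W=\chi_{\{x,y,z\}}$ and $H=\Delta-QW$. If there is an automorphism of $G$ of order three that permutes the wells $x,y,z$ cyclically, then there is no perfect tunneling from $y$ to $z$; in fact $TC(y,z)=4/9$.
   Context: $\Delta$ is the symmetrized Laplacian: $\Delta(v,v)=1$, $\Delta(v,w)=-1/\sqrt{d_vd_w}$ if $vw\in E$ ($d_v$ the degree), $0$ otherwise; $W$ is viewed as a diagonal matrix and $Q$ is a real parameter. Starting from vertex $u$, the state is $\varphi_t=e^{itH}\chi_u$ ($\chi_u$ the indicator of $u$), depending on $Q$; $TC(u,v)=\liminf_{Q\to\infty}\sup_{t\in[0,\infty)}|\varphi_t(v)|^2$. *)

theory Defs
  imports "HOL-Analysis.Analysis"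
begin

definition simple_graph :: "('a \<Rightarrow> 'a \<Rightarrow> bool) \<Rightarrow> bool" where
  "simple_graph E \<longleftrightarrow> (\<forall>a b. E a b = E b a) \<and> (\<forall>a. \<not> E a a)"

definition graph_connected :: "('a \<Rightarrow> 'a \<Rightarrow> bool) \<Rightarrow> bool" where
  "graph_connected E \<longleftrightarrow> (\<forall>v w. E\<^sup>*\<^sup>* v w)"

definition deg :: "('a \<Rightarrow> 'a \<Rightarrow> bool) \<Rightarrow> 'a \<Rightarrow> nat" where
  "deg E v = card {w. E v w}"

definition lap :: "('a \<Rightarrow> 'a \<Rightarrow> bool) \<Rightarrow> 'a \<Rightarrow> 'a \<Rightarrow> real" where
  "lap E v w = (if v = w then 1
                else if E v w then - 1 / sqrt (real (deg E v) * real (deg E w)) else 0)"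

definition ham :: "('a \<Rightarrow> 'a \<Rightarrow> bool) \<Rightarrow> 'a set \<Rightarrow> real \<Rightarrow> 'a \<Rightarrow> 'a \<Rightarrow> complex" where
  "ham E S Q v w = complex_of_real (lap E v w - (if v = w then Q * indicator S v else 0))"

definition mvec :: "('a::finite \<Rightarrow> 'a \<Rightarrow> complex) \<Rightarrow> ('a \<Rightarrow> complex) \<Rightarrow> 'a \<Rightarrow> complex" where
  "mvec M f = (\<lambda>i. \<Sum>j\<in>UNIV. M i j * f j)"

definition evol :: "('a::finite \<Rightarrow> 'a \<Rightarrow> bool) \<Rightarrow> 'a set \<Rightarrow> real \<Rightarrow> real \<Rightarrow> 'a \<Rightarrow> 'a \<Rightarrow> complex" where
  "evol E S Q t u v =
     (\<Sum>k. ((\<i> * complex_of_real t) ^ k / fact k) * ((mvec (ham E S Q) ^^ k) (indicator {u}) v))"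

definition TC :: "('a::finite \<Rightarrow> 'a \<Rightarrow> bool) \<Rightarrow> 'a set \<Rightarrow> 'a \<Rightarrow> 'a \<Rightarrow> ereal" where
  "TC E S u v = Liminf at_top (\<lambda>Q::real. SUP t\<in>{0..}. ereal ((cmod (evol E S Q t u v))\<^sup>2))"

definition graph_aut :: "('a \<Rightarrow> 'a \<Rightarrow> bool) \<Rightarrow> ('a \<Rightarrow> 'a) \<Rightarrow> bool" where
  "graph_aut E \<sigma> \<longleftrightarrow> bij \<sigma> \<and> (\<forall>a b. E a b = E (\<sigma> a) (\<sigma> b))"

end

theory Submission
  imports Defs "HOL-Real_Asymp.Real_Asymp"
begin

text \<open>Expand \<open>H = \<Delta> - Q W\<close> in an orthonormal eigenbasis and let \<open>P\<^sub>\<lambda>\<close> be its spectral projections.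
  The rotation of the wells commutes with \<open>H\<close>, so on the wells each \<open>P\<^sub>\<lambda>\<close> has a single diagonal
  value \<open>p\<^sub>\<lambda>\<close> and a single off-diagonal value \<open>q\<^sub>\<lambda>\<close>. With \<open>s = \<chi>\<^sub>{x,y,z}\<close> and \<open>d = \<chi>\<^sub>y - \<chi>\<^sub>z\<close> this
  gives \<open>q\<^sub>\<lambda> = |P\<^sub>\<lambda> s|\<^sup>2/9 - |P\<^sub>\<lambda> d|\<^sup>2/6\<close>, and \<open>\<phi>\<^sub>t(z) = \<Sum>\<^sub>\<lambda> exp (i t \<lambda>) q\<^sub>\<lambda>\<close> has modulus at most
  \<open>|s|\<^sup>2/9 + |d|\<^sup>2/6 = 2/3\<close>.

  For large \<open>Q\<close>, vectors supported on the wells put all but \<open>O(1/Q\<^sup>2)\<close> of their mass on eigenvalues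
  below \<open>-Q/2\<close>, and eigenvectors for such eigenvalues live essentially on the wells; hence \<open>s\<close> and
  \<open>d\<close> are each concentrated on a single eigenvalue. These two eigenvalues differ, because no
  eigenvector for a negative eigenvalue can vanish at \<open>x\<close> and \<open>z\<close> without vanishing at \<open>y\<close>
  (a minimum principle plus connectivity). At a time when their phases are opposite,
  \<open>|\<phi>\<^sub>t(z)| \<ge> 2/3 - O(1/Q\<^sup>2)\<close>, so \<open>TC(y,z) = (2/3)\<^sup>2 = 4/9\<close>.\<close>

definition dot :: "('a::finite \<Rightarrow> real) \<Rightarrow> ('a \<Rightarrow> real) \<Rightarrow> real" where
  "dot f g = (\<Sum>i\<in>UNIV. f i * g i)"

definition matvec :: "('a::finite \<Rightarrow> 'a \<Rightarrow> real) \<Rightarrow> ('a \<Rightarrow> real) \<Rightarrow> 'a \<Rightarrow> real" where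
  "matvec M f = (\<lambda>i. \<Sum>j\<in>UNIV. M i j * f j)"

lemma dot_commute: "dot f g = dot g f"
  by (simp add: dot_def mult.commute)

lemma dot_self_nonneg: "dot f f \<ge> 0"
  by (simp add: dot_def sum_nonneg)

lemma dot_indicator_right: "dot f (indicator {u}) = f u"
  by (simp add: dot_def indicator_def if_distrib cong: if_cong)

lemma dot_scale_left: "dot (\<lambda>i. c * f i) g = c * dot f g"
  by (simp add: dot_def sum_distrib_left mult.assoc)

lemma dot_sum_right: "dot f (\<lambda>i. \<Sum>b\<in>S. c b * b i) = (\<Sum>b\<in>S. c b * dot f b)"
proof -
  have "dot f (\<lambda>i. \<Sum>b\<in>S. c b * b i) = (\<Sum>i\<in>UNIV. \<Sum>b\<in>S. c b * (f i * b i))"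
    by (simp add: dot_def sum_distrib_left mult_ac)
  also have "\<dots> = (\<Sum>b\<in>S. \<Sum>i\<in>UNIV. c b * (f i * b i))" by (rule sum.swap)
  finally show ?thesis by (simp add: dot_def sum_distrib_left)
qed

lemma matvec_sum: "matvec M (\<lambda>i. \<Sum>b\<in>S. c b * b i) = (\<lambda>i. \<Sum>b\<in>S. c b * matvec M b i)"
proof
  fix i
  have "matvec M (\<lambda>i. \<Sum>b\<in>S. c b * b i) i = (\<Sum>j\<in>UNIV. \<Sum>b\<in>S. M i j * (c b * b j))"
    by (simp add: matvec_def sum_distrib_left)
  also have "\<dots> = (\<Sum>b\<in>S. \<Sum>j\<in>UNIV. M i j * (c b * b j))" by (rule sum.swap)
  also have "\<dots> = (\<Sum>b\<in>S. c b * matvec M b i)" by (simp add: matvec_def sum_distrib_left mult_ac)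
  finally show "matvec M (\<lambda>i. \<Sum>b\<in>S. c b * b i) i = (\<Sum>b\<in>S. c b * matvec M b i)" .
qed

lemma matvec_scale: "matvec M (\<lambda>i. c * f i) = (\<lambda>i. c * matvec M f i)"
  by (simp add: matvec_def sum_distrib_left mult_ac)

lemma dot_matvec_symmetric:
  assumes "\<And>i j. M i j = M j i"
  shows "dot (matvec M f) g = dot f (matvec M g)"
proof -
  have "dot (matvec M f) g = (\<Sum>i\<in>UNIV. \<Sum>j\<in>UNIV. M i j * f j * g i)"
    by (simp add: dot_def matvec_def sum_distrib_right)
  also have "\<dots> = (\<Sum>j\<in>UNIV. \<Sum>i\<in>UNIV. M i j * f j * g i)" by (rule sum.swap)
  also have "\<dots> = dot f (matvec M g)"
    by (simp add: dot_def matvec_def sum_distrib_left assms[of _ "_::'a"] mult_ac)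
  finally show ?thesis .
qed

lemma eigenvectors_orthogonal:
  assumes "\<And>i j. M i j = M j i"
    and "matvec M g1 = (\<lambda>i. \<mu>1 * g1 i)" "matvec M g2 = (\<lambda>i. \<mu>2 * g2 i)" "\<mu>1 \<noteq> \<mu>2"
  shows "dot g1 g2 = 0"
proof -
  have "\<mu>1 * dot g1 g2 = dot (matvec M g1) g2" using assms(2) by (simp add: dot_scale_left)
  also have "\<dots> = dot g1 (matvec M g2)" using assms(1) by (rule dot_matvec_symmetric)
  also have "\<dots> = \<mu>2 * dot g1 g2" using assms(3) by (simp add: dot_scale_left dot_commute[of g1])
  finally show ?thesis using assms(4) by simp
qed

lemma matvec_comp_bij:
  assumes "bij \<pi>" and "\<And>i j. M (\<pi> i) (\<pi> j) = M i j"
  shows "matvec M (f \<circ> \<pi>) = matvec M f \<circ> \<pi>"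
proof
  fix i
  have "matvec M (f \<circ> \<pi>) i = (\<Sum>j\<in>UNIV. M (\<pi> i) (\<pi> j) * f (\<pi> j))"
    unfolding matvec_def using assms(2) by simp
  also have "\<dots> = (\<Sum>k\<in>UNIV. M (\<pi> i) k * f k)"
    using sum.reindex[OF bij_is_inj[OF assms(1)], of "\<lambda>k. M (\<pi> i) k * f k"] assms(1)
    by (simp add: bij_def)
  finally show "matvec M (f \<circ> \<pi>) i = (matvec M f \<circ> \<pi>) i" unfolding matvec_def by simp
qed

definition orthonormal_eigenvectors :: "('v::euclidean_space \<Rightarrow> 'v) \<Rightarrow> 'v set \<Rightarrow> bool" where
  "orthonormal_eigenvectors A B \<longleftrightarrow> finite B
     \<and> (\<forall>b\<in>B. \<forall>c\<in>B. inner b c = (if b = c then 1 else 0)) \<and> (\<forall>b\<in>B. \<exists>l. A b = l *\<^sub>R b)"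

lemma card_orthonormal_eigenvectors:
  assumes "orthonormal_eigenvectors A (B :: 'v::euclidean_space set)"
  shows "card B \<le> DIM('v)"
proof -
  have "pairwise orthogonal B"
    using assms unfolding orthonormal_eigenvectors_def pairwise_def orthogonal_def by auto
  moreover have "0 \<notin> B" using assms unfolding orthonormal_eigenvectors_def by force
  ultimately show ?thesis using independent_bound pairwise_orthogonal_independent by blast
qed

text \<open>First variation of the Rayleigh quotient: if the unit vector \<open>u\<close> maximises it along the
  line through \<open>u\<close> in the direction of the residual \<open>A u - \<rho> u\<close>, the residual vanishes.\<close>

lemma rayleigh_maximizer_eigenvector:
  fixes A :: "'v::real_inner \<Rightarrow> 'v"
  assumes lin: "linear A" and sa: "\<And>u w. inner (A u) w = inner u (A w)"
    and unit: "norm u = 1"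
    and max: "\<And>\<epsilon>. inner (u + \<epsilon> *\<^sub>R w) (A (u + \<epsilon> *\<^sub>R w)) \<le> \<rho> * (norm (u + \<epsilon> *\<^sub>R w))\<^sup>2"
    and w: "w = A u - \<rho> *\<^sub>R u" and \<rho>: "\<rho> = inner u (A u)"
  shows "A u = \<rho> *\<^sub>R u"
proof -
  have uu: "inner u u = 1" using unit by (simp add: power2_norm_eq_inner[symmetric])
  have wu: "inner w u = 0" unfolding w \<rho> using uu
    by (simp add: inner_diff_left inner_commute[of "A u" u])
  have wAu: "inner w (A u) = (norm w)\<^sup>2"
  proof -
    have "inner w (A u) = inner w w + \<rho> * inner w u" unfolding w by (simp add: inner_diff_right inner_diff_left)
    thus ?thesis using wu by (simp add: power2_norm_eq_inner)
  qed
  define c where "c = inner w (A w)"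
  have key: "2 * \<epsilon> * (norm w)\<^sup>2 + \<epsilon>\<^sup>2 * c \<le> \<rho> * \<epsilon>\<^sup>2 * (norm w)\<^sup>2" for \<epsilon>
  proof -
    have "A (u + \<epsilon> *\<^sub>R w) = A u + \<epsilon> *\<^sub>R A w" using lin by (simp add: linear_add linear_scale)
    moreover have "inner u (A w) = inner w (A u)" using sa[of w u] by (simp add: inner_commute)
    ultimately have "inner (u + \<epsilon> *\<^sub>R w) (A (u + \<epsilon> *\<^sub>R w)) = \<rho> + 2 * \<epsilon> * (norm w)\<^sup>2 + \<epsilon>\<^sup>2 * c"
      unfolding \<rho> c_def using wAu
      by (simp add: inner_add_left inner_add_right power2_eq_square algebra_simps)
    moreover have "(norm (u + \<epsilon> *\<^sub>R w))\<^sup>2 = 1 + \<epsilon>\<^sup>2 * (norm w)\<^sup>2"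
    proof -
      have "(norm (u + \<epsilon> *\<^sub>R w))\<^sup>2 = inner (u + \<epsilon> *\<^sub>R w) (u + \<epsilon> *\<^sub>R w)"
        by (simp add: power2_norm_eq_inner)
      also have "\<dots> = inner u u + 2 * \<epsilon> * inner w u + \<epsilon>\<^sup>2 * inner w w"
        by (simp add: inner_add_left inner_add_right inner_commute[of u w] power2_eq_square algebra_simps)
      finally show ?thesis using uu wu by (simp add: power2_norm_eq_inner)
    qed
    ultimately show ?thesis using max[of \<epsilon>] by (simp add: algebra_simps)
  qed
  have "w = 0"
  proof (rule ccontr)
    assume "w \<noteq> 0"
    hence p: "(norm w)\<^sup>2 > 0" by simp
    define K where "K = \<bar>\<rho> * (norm w)\<^sup>2 - c\<bar> + 1"
    have K: "K > 0" unfolding K_def by simp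
    define \<epsilon> where "\<epsilon> = (norm w)\<^sup>2 / K"
    have ep: "\<epsilon> > 0" unfolding \<epsilon>_def using p K by simp
    have "2 * \<epsilon> * (norm w)\<^sup>2 \<le> \<epsilon> * (\<epsilon> * (\<rho> * (norm w)\<^sup>2 - c))"
      using key[of \<epsilon>] by (simp add: power2_eq_square algebra_simps)
    hence "2 * (norm w)\<^sup>2 \<le> \<epsilon> * (\<rho> * (norm w)\<^sup>2 - c)" using ep by simp
    also have "\<dots> \<le> \<epsilon> * K" using ep unfolding K_def by (intro mult_left_mono) auto
    also have "\<dots> = (norm w)\<^sup>2" unfolding \<epsilon>_def using K by simp
    finally show False using p by simp
  qed
  thus ?thesis using w by simp
qed

lemma exists_eigenvector_orthogonal:
  fixes A :: "'v::euclidean_space \<Rightarrow> 'v"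
  assumes lin: "linear A" and sa: "\<And>u w. inner (A u) w = inner u (A w)"
    and eig: "\<forall>b\<in>B. \<exists>l. A b = l *\<^sub>R b" and v: "v \<noteq> 0" "\<forall>b\<in>B. inner v b = 0"
  shows "\<exists>u. (\<forall>b\<in>B. inner u b = 0) \<and> norm u = 1 \<and> (\<exists>l. A u = l *\<^sub>R u)"
proof -
  define V where "V = (\<Inter>b\<in>B. {u. inner b u = 0})"
  have V: "u \<in> V \<longleftrightarrow> (\<forall>b\<in>B. inner u b = 0)" for u unfolding V_def by (auto simp: inner_commute)
  have compact: "compact (V \<inter> sphere 0 1)"
    unfolding V_def by (intro closed_Int_compact compact_sphere closed_INT ballI closed_hyperplane)
  have cont: "continuous_on (V \<inter> sphere 0 1) (\<lambda>u. inner u (A u))"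
    using lin by (intro continuous_intros linear_continuous_on) (simp add: linear_conv_bounded_linear)
  have "v /\<^sub>R norm v \<in> V \<inter> sphere 0 1" using v by (simp add: V)
  then obtain u where u: "u \<in> V \<inter> sphere 0 1"
    and umax: "\<And>w. w \<in> V \<inter> sphere 0 1 \<Longrightarrow> inner w (A w) \<le> inner u (A u)"
    using continuous_attains_sup[OF compact _ cont] by blast
  define \<rho> where "\<rho> = inner u (A u)"
  have quad: "inner w (A w) \<le> \<rho> * (norm w)\<^sup>2" if "w \<in> V" for w
  proof (cases "w = 0")
    case True thus ?thesis using lin by (simp add: linear_0)
  next
    case False
    have "w /\<^sub>R norm w \<in> V \<inter> sphere 0 1" using that False by (simp add: V)
    hence "inner (w /\<^sub>R norm w) (A (w /\<^sub>R norm w)) \<le> \<rho>" using umax \<rho>_def by blast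
    moreover have "inner (w /\<^sub>R norm w) (A (w /\<^sub>R norm w)) = inner w (A w) / (norm w)\<^sup>2"
      using lin by (simp add: linear_scale power2_eq_square field_simps)
    ultimately show ?thesis using False by (simp add: divide_le_eq mult.commute)
  qed
  define w where "w = A u - \<rho> *\<^sub>R u"
  have "w \<in> V"
    unfolding V
  proof
    fix b assume b: "b \<in> B"
    then obtain l where l: "A b = l *\<^sub>R b" using eig by blast
    have "inner (A u) b = inner u (A b)" by (rule sa)
    also have "\<dots> = 0" using l u b by (simp add: V)
    finally show "inner w b = 0" using u b unfolding w_def by (simp add: V inner_diff_left)
  qed
  hence "u + \<epsilon> *\<^sub>R w \<in> V" for \<epsilon> using u by (simp add: V inner_add_left)
  hence "A u = \<rho> *\<^sub>R u"
    using u by (intro rayleigh_maximizer_eigenvector[OF lin sa _ quad w_def \<rho>_def]) auto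
  thus ?thesis using u by (auto simp: V)
qed

lemma orthonormal_eigenbasis_exists:
  fixes A :: "'v::euclidean_space \<Rightarrow> 'v"
  assumes lin: "linear A" and sa: "\<And>u w. inner (A u) w = inner u (A w)"
  shows "\<exists>B. orthonormal_eigenvectors A B \<and> (\<forall>v. v = (\<Sum>b\<in>B. inner b v *\<^sub>R b))"
proof -
  define P where "P k \<longleftrightarrow> (\<exists>B. orthonormal_eigenvectors A B \<and> card B = k)" for k
  have "P 0" unfolding P_def orthonormal_eigenvectors_def by (intro exI[of _ "{}"]) auto
  moreover have "\<forall>k. P k \<longrightarrow> k \<le> DIM('v)" unfolding P_def using card_orthonormal_eigenvectors by blast
  ultimately obtain k where "P k" and kmax: "\<forall>j. P j \<longrightarrow> j \<le> k"
    using Nat.ex_has_greatest_nat by blast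
  then obtain B where ob: "orthonormal_eigenvectors A B" and cB: "card B = k" unfolding P_def by blast
  have fin: "finite B" and orth: "\<forall>b\<in>B. \<forall>c\<in>B. inner b c = (if b = c then 1 else 0)"
    and eig: "\<forall>b\<in>B. \<exists>l. A b = l *\<^sub>R b" using ob unfolding orthonormal_eigenvectors_def by auto
  text \<open>A maximal orthonormal family of eigenvectors spans: a nonzero residual would yield one more.\<close>
  have "v = (\<Sum>b\<in>B. inner b v *\<^sub>R b)" for v
  proof (rule ccontr)
    define r where "r = v - (\<Sum>b\<in>B. inner b v *\<^sub>R b)"
    assume "v \<noteq> (\<Sum>b\<in>B. inner b v *\<^sub>R b)"
    hence r0: "r \<noteq> 0" unfolding r_def by simp
    have "inner r c = 0" if c: "c \<in> B" for c
    proof -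
      have "inner (\<Sum>b\<in>B. inner b v *\<^sub>R b) c = (\<Sum>b\<in>B. if b = c then inner c v else 0)"
        using orth c by (auto simp: inner_sum_left intro: sum.cong)
      moreover have "inner r c = inner v c - inner (\<Sum>b\<in>B. inner b v *\<^sub>R b) c"
        unfolding r_def by (rule inner_diff_left)
      ultimately show ?thesis using fin c by (simp add: inner_commute)
    qed
    then obtain u where u: "\<forall>b\<in>B. inner u b = 0" "norm u = 1" "\<exists>l. A u = l *\<^sub>R u"
      using exists_eigenvector_orthogonal[OF lin sa eig r0] by blast
    have uu: "inner u u = 1" using u(2) by (simp add: power2_norm_eq_inner[symmetric])
    hence uB: "u \<notin> B" using u(1) by auto
    have "orthonormal_eigenvectors A (insert u B)"
      unfolding orthonormal_eigenvectors_def using fin orth eig u uu by (auto simp: inner_commute)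
    hence "P (Suc k)" unfolding P_def using cB fin uB by (intro exI[of _ "insert u B"]) auto
    thus False using kmax by fastforce
  qed
  thus ?thesis using ob by blast
qed

locale eigenbasis =
  fixes M :: "'a::finite \<Rightarrow> 'a \<Rightarrow> real" and B :: "('a \<Rightarrow> real) set"
    and lam :: "('a \<Rightarrow> real) \<Rightarrow> real"
  assumes symmetric: "M i j = M j i"
    and finite_basis: "finite B"
    and orthonormal: "b \<in> B \<Longrightarrow> c \<in> B \<Longrightarrow> dot b c = (if b = c then 1 else 0)"
    and eigenvector: "b \<in> B \<Longrightarrow> matvec M b = (\<lambda>i. lam b * b i)"
    and expansion: "f i = (\<Sum>b\<in>B. dot b f * b i)"

lemma symmetric_matrix_eigenbasis:
  fixes M :: "'a::finite \<Rightarrow> 'a \<Rightarrow> real"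
  assumes sym: "\<And>i j. M i j = M j i"
  shows "\<exists>B lam. eigenbasis M B lam"
proof -
  define A :: "real^'a \<Rightarrow> real^'a" where "A v = (\<chi> i. \<Sum>j\<in>UNIV. M i j * v$j)" for v
  have lin: "linear A"
    by (rule linearI) (simp_all add: A_def vec_eq_iff sum.distrib algebra_simps sum_distrib_left)
  have sa: "inner (A u) w = inner u (A w)" for u w
  proof -
    have "inner (A u) w = (\<Sum>i\<in>UNIV. \<Sum>j\<in>UNIV. M i j * u$j * w$i)"
      by (simp add: A_def inner_vec_def sum_distrib_right)
    also have "\<dots> = (\<Sum>j\<in>UNIV. \<Sum>i\<in>UNIV. M i j * u$j * w$i)" by (rule sum.swap)
    also have "\<dots> = inner u (A w)"
      by (simp add: A_def inner_vec_def sum_distrib_left sym[of _ "_::'a"] mult_ac)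
    finally show ?thesis .
  qed
  obtain B0 where ob: "orthonormal_eigenvectors A B0" and exp0: "\<forall>v. v = (\<Sum>b\<in>B0. inner b v *\<^sub>R b)"
    using orthonormal_eigenbasis_exists[OF lin sa] by blast
  have fin0: "finite B0" and orth0: "\<forall>b\<in>B0. \<forall>c\<in>B0. inner b c = (if b = c then 1 else 0)"
    and eig0: "\<forall>b\<in>B0. \<exists>l. A b = l *\<^sub>R b" using ob unfolding orthonormal_eigenvectors_def by auto
  define B where "B = vec_nth ` B0"
  define lam where "lam b = (SOME l. matvec M b = (\<lambda>i. l * b i))" for b
  have inj: "inj_on vec_nth B0" by (simp add: inj_on_def vec_nth_inject)
  have dot_vec: "dot (vec_nth b) (vec_nth c) = inner b c" for b c by (simp add: dot_def inner_vec_def)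
  have "eigenbasis M B lam"
  proof
    show "M i j = M j i" for i j by (rule sym)
    show "finite B" unfolding B_def using fin0 by simp
    show "dot b c = (if b = c then 1 else 0)" if "b \<in> B" "c \<in> B" for b c
      using that orth0 unfolding B_def by (auto simp: vec_nth_inject dot_vec)
    show "matvec M b = (\<lambda>i. lam b * b i)" if "b \<in> B" for b
    proof -
      obtain b0 where b0: "b0 \<in> B0" "b = vec_nth b0" using \<open>b \<in> B\<close> unfolding B_def by blast
      then obtain l where "A b0 = l *\<^sub>R b0" using eig0 by blast
      hence "matvec M b = (\<lambda>i. l * b i)" using b0 by (simp add: matvec_def A_def fun_eq_iff vec_eq_iff)
      thus ?thesis unfolding lam_def by (rule someI)
    qed
    show "f i = (\<Sum>b\<in>B. dot b f * b i)" for f i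
    proof -
      have "vec_lambda f $ i = (\<Sum>b\<in>B0. inner b (vec_lambda f) *\<^sub>R b) $ i" using exp0 by metis
      also have "\<dots> = (\<Sum>b\<in>B. dot b f * b i)"
        unfolding B_def by (simp add: sum.reindex[OF inj] dot_def inner_vec_def)
      finally show ?thesis by simp
    qed
  qed
  thus ?thesis by blast
qed

context eigenbasis
begin

abbreviation spectrum :: "real set" where "spectrum \<equiv> lam ` B"

abbreviation basis_at :: "real \<Rightarrow> ('a \<Rightarrow> real) set" where "basis_at l \<equiv> {b\<in>B. lam b = l}"

definition eigenproj :: "real \<Rightarrow> ('a \<Rightarrow> real) \<Rightarrow> 'a \<Rightarrow> real" where
  "eigenproj l f = (\<lambda>i. \<Sum>b\<in>basis_at l. dot b f * b i)"

definition eigenkernel :: "real \<Rightarrow> 'a \<Rightarrow> 'a \<Rightarrow> real" where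
  "eigenkernel l u v = (\<Sum>b\<in>basis_at l. b u * b v)"

lemma sum_over_spectrum: "(\<Sum>l\<in>spectrum. \<Sum>b\<in>basis_at l. g b) = (\<Sum>b\<in>B. g b)"
  using sum.image_gen[OF finite_basis, of g lam] by simp

lemma sum_over_spectrum_above:
  "(\<Sum>l\<in>spectrum. if l \<ge> c then (\<Sum>b\<in>basis_at l. g b) else 0) = (\<Sum>b\<in>B. if lam b \<ge> c then g b else 0)"
proof -
  have "(\<Sum>b\<in>B. if lam b \<ge> c then g b else 0)
      = (\<Sum>l\<in>spectrum. \<Sum>b\<in>basis_at l. if lam b \<ge> c then g b else 0)"
    by (rule sum_over_spectrum[symmetric])
  also have "\<dots> = (\<Sum>l\<in>spectrum. if l \<ge> c then (\<Sum>b\<in>basis_at l. g b) else 0)"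
    by (intro sum.cong refl) auto
  finally show ?thesis by simp
qed

lemma expansion_fun: "f = (\<lambda>i. \<Sum>b\<in>B. dot b f * b i)"
  using expansion by blast

lemma parseval: "dot f g = (\<Sum>b\<in>B. dot b f * dot b g)"
proof -
  have "dot f g = dot g (\<lambda>i. \<Sum>b\<in>B. dot b f * b i)" by (subst expansion_fun) (rule dot_commute)
  thus ?thesis by (simp add: dot_sum_right dot_commute[of g])
qed

lemma dot_basis_matvec: "b \<in> B \<Longrightarrow> dot b (matvec M f) = lam b * dot b f"
  using dot_matvec_symmetric[of M b f, OF symmetric] by (simp add: eigenvector dot_scale_left)

lemma eigenproj_eigenvector: "matvec M (eigenproj l f) = (\<lambda>i. l * eigenproj l f i)"
  unfolding eigenproj_def matvec_sum by (auto simp: eigenvector sum_distrib_left mult_ac)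

lemma eigenproj_of_eigenvector:
  assumes eig: "matvec M g = (\<lambda>i. \<mu> * g i)"
  shows "eigenproj l g = (if l = \<mu> then g else (\<lambda>i. 0))"
proof -
  have orth: "dot b g = 0" if "b \<in> B" "lam b \<noteq> \<mu>" for b
    using eigenvectors_orthogonal[OF symmetric eigenvector eig] that by simp
  show ?thesis
  proof (cases "l = \<mu>")
    case True
    have "eigenproj l g i = g i" for i
    proof -
      have "eigenproj l g i = (\<Sum>b\<in>B. if lam b = l then dot b g * b i else 0)"
        unfolding eigenproj_def using finite_basis by (simp add: sum.inter_filter)
      also have "\<dots> = (\<Sum>b\<in>B. dot b g * b i)" using orth True by (intro sum.cong) auto
      finally show ?thesis using expansion by metis
    qed
    thus ?thesis using True by auto
  next
    case False
    thus ?thesis unfolding eigenproj_def using orth by (auto intro!: sum.neutral)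
  qed
qed

lemma sum_eigenproj: "f i = (\<Sum>l\<in>spectrum. eigenproj l f i)"
  unfolding eigenproj_def sum_over_spectrum by (rule expansion)

lemma eigenproj_sum: "eigenproj l (\<lambda>i. \<Sum>m\<in>S. g m i) = (\<lambda>i. \<Sum>m\<in>S. eigenproj l (g m) i)"
proof
  fix i
  have "eigenproj l (\<lambda>i. \<Sum>m\<in>S. g m i) i = (\<Sum>b\<in>basis_at l. \<Sum>m\<in>S. dot b (g m) * b i)"
    unfolding eigenproj_def
    by (simp add: dot_def sum_distrib_left sum_distrib_right) (simp add: sum.swap[of _ UNIV])
  also have "\<dots> = (\<Sum>m\<in>S. eigenproj l (g m) i)" unfolding eigenproj_def by (rule sum.swap)
  finally show "eigenproj l (\<lambda>i. \<Sum>m\<in>S. g m i) i = (\<Sum>m\<in>S. eigenproj l (g m) i)" .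
qed

lemma eigenproj_comp_symmetry:
  assumes \<pi>: "bij \<pi>" "\<And>i j. M (\<pi> i) (\<pi> j) = M i j"
  shows "eigenproj l (f \<circ> \<pi>) = eigenproj l f \<circ> \<pi>"
proof -
  have eig: "matvec M (eigenproj m f \<circ> \<pi>) = (\<lambda>i. m * (eigenproj m f \<circ> \<pi>) i)" for m
    using matvec_comp_bij[of \<pi> M "eigenproj m f", OF \<pi>] eigenproj_eigenvector[of m f] by (simp add: o_def)
  have "f \<circ> \<pi> = (\<lambda>i. \<Sum>m\<in>spectrum. (eigenproj m f \<circ> \<pi>) i)"
    using sum_eigenproj[of f] by (auto simp: fun_eq_iff)
  hence "eigenproj l (f \<circ> \<pi>) = (\<lambda>i. \<Sum>m\<in>spectrum. eigenproj l (eigenproj m f \<circ> \<pi>) i)"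
    by (simp only: eigenproj_sum)
  also have "\<dots> = (\<lambda>i. \<Sum>m\<in>spectrum. if l = m then (eigenproj m f \<circ> \<pi>) i else 0)"
    using eigenproj_of_eigenvector[OF eig] by (intro ext sum.cong) auto
  also have "\<dots> = eigenproj l f \<circ> \<pi>"
  proof (cases "l \<in> spectrum")
    case True thus ?thesis using finite_basis by (auto simp: fun_eq_iff)
  next
    case False
    hence empty: "basis_at l = {}" by auto
    have "eigenproj l f \<circ> \<pi> = (\<lambda>i. 0)" unfolding eigenproj_def empty by (simp add: fun_eq_iff)
    moreover have "(\<lambda>i. \<Sum>m\<in>spectrum. if l = m then (eigenproj m f \<circ> \<pi>) i else 0) = (\<lambda>i. 0)"
      using False by (intro ext sum.neutral) auto
    ultimately show ?thesis by simp
  qed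
  finally show ?thesis .
qed

lemma eigenkernel_eq_eigenproj: "eigenkernel l u v = eigenproj l (indicator {v}) u"
  unfolding eigenkernel_def eigenproj_def by (simp add: dot_indicator_right mult.commute)

lemma eigenkernel_sym: "eigenkernel l u v = eigenkernel l v u"
  unfolding eigenkernel_def by (simp add: mult.commute)

lemma eigenkernel_symmetry:
  assumes \<pi>: "bij \<pi>" "\<And>i j. M (\<pi> i) (\<pi> j) = M i j"
  shows "eigenkernel l (\<pi> u) (\<pi> v) = eigenkernel l u v"
proof -
  have "indicator {\<pi> v} \<circ> \<pi> = (indicator {v} :: 'a \<Rightarrow> real)"
    using bij_is_inj[OF \<pi>(1)] by (auto simp: fun_eq_iff indicator_def inj_eq)
  hence "eigenproj l (indicator {v}) = eigenproj l (indicator {\<pi> v}) \<circ> \<pi>"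
    using eigenproj_comp_symmetry[OF \<pi>, of l "indicator {\<pi> v}"] by simp
  thus ?thesis by (simp add: eigenkernel_eq_eigenproj)
qed

lemma eigenproj_eq_kernel_sum: "eigenproj l f u = (\<Sum>w\<in>UNIV. f w * eigenkernel l u w)"
proof -
  have "eigenproj l f u = (\<Sum>b\<in>basis_at l. \<Sum>w\<in>UNIV. f w * (b u * b w))"
    unfolding eigenproj_def dot_def by (simp add: sum_distrib_left sum_distrib_right mult_ac)
  also have "\<dots> = (\<Sum>w\<in>UNIV. f w * eigenkernel l u w)"
    unfolding eigenkernel_def by (subst sum.swap) (simp add: sum_distrib_left)
  finally show ?thesis .
qed

lemma matpow_indicator:
  assumes "\<And>i j. C i j = complex_of_real (M i j)"
  shows "(mvec C ^^ k) (indicator {u}) = (\<lambda>v. \<Sum>b\<in>B. complex_of_real (lam b ^ k * b u * b v))"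
proof (induction k)
  case 0
  have "(indicator {u} v :: real) = (\<Sum>b\<in>B. b u * b v)" for v
    using expansion[of "indicator {u}" v] by (simp add: dot_indicator_right)
  hence "(indicator {u} v :: complex) = complex_of_real (\<Sum>b\<in>B. b u * b v)" for v
    by (metis of_real_indicator)
  thus ?case by auto
next
  case (Suc k)
  have "(mvec C ^^ Suc k) (indicator {u}) i = complex_of_real (\<Sum>b\<in>B. lam b ^ k * b u * matvec M b i)"
    for i
    by (simp add: Suc.IH mvec_def matvec_def assms sum_distrib_left sum.swap[of _ UNIV] mult_ac)
  moreover have "(\<Sum>b\<in>B. lam b ^ k * b u * matvec M b i) = (\<Sum>b\<in>B. lam b ^ Suc k * b u * b i)" for i
    by (intro sum.cong) (auto simp: eigenvector)
  ultimately show ?case by auto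
qed

lemma exp_series_indicator:
  assumes "\<And>i j. C i j = complex_of_real (M i j)"
  shows "(\<lambda>k. (\<i> * complex_of_real t) ^ k / fact k * (mvec C ^^ k) (indicator {u}) v)
           sums (\<Sum>b\<in>B. cis (t * lam b) * complex_of_real (b u * b v))"
proof -
  have "(\<i> * complex_of_real t) ^ k / fact k * (mvec C ^^ k) (indicator {u}) v
      = (\<Sum>b\<in>B. complex_of_real (b u * b v) * ((\<i> * complex_of_real (t * lam b)) ^ k /\<^sub>R fact k))" for k
    unfolding matpow_indicator[OF assms]
    by (simp add: sum_distrib_left power_mult_distrib scaleR_conv_of_real divide_inverse mult_ac)
  moreover have "(\<lambda>k. \<Sum>b\<in>B. complex_of_real (b u * b v) * ((\<i> * complex_of_real (t * lam b)) ^ k /\<^sub>R fact k))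
      sums (\<Sum>b\<in>B. complex_of_real (b u * b v) * exp (\<i> * complex_of_real (t * lam b)))"
    by (intro sums_sum sums_mult exp_converges)
  ultimately show ?thesis by (simp add: cis_conv_exp mult.commute)
qed

end

lemma single_dominant_level:
  fixes V :: "real \<Rightarrow> real"
  assumes fin: "finite L" and nonneg: "\<And>l. V l \<ge> 0" and total: "(\<Sum>l\<in>L. V l) = T"
    and high: "(\<Sum>l\<in>L. if l \<ge> c then V l else 0) \<le> \<delta>" and "\<delta> < T"
    and unique: "\<And>l1 l2. l1 < c \<Longrightarrow> l2 < c \<Longrightarrow> V l1 > 0 \<Longrightarrow> V l2 > 0 \<Longrightarrow> l1 = l2"
  shows "\<exists>\<alpha>\<in>L. \<alpha> < c \<and> V \<alpha> > 0 \<and> (\<Sum>l\<in>L-{\<alpha>}. V l) \<le> \<delta>"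
proof -
  have "\<exists>\<alpha>\<in>L. \<alpha> < c \<and> V \<alpha> > 0"
  proof (rule ccontr)
    assume "\<not> ?thesis"
    hence "V l = (if l \<ge> c then V l else 0)" if "l \<in> L" for l
      using that nonneg[of l] by (cases "l \<ge> c") (auto simp: not_le)
    hence "(\<Sum>l\<in>L. V l) = (\<Sum>l\<in>L. if l \<ge> c then V l else 0)" by (rule sum.cong[OF refl])
    thus False using total high \<open>\<delta> < T\<close> by simp
  qed
  then obtain \<alpha> where \<alpha>: "\<alpha> \<in> L" "\<alpha> < c" "V \<alpha> > 0" by blast
  have "(\<Sum>l\<in>L-{\<alpha>}. V l) = (\<Sum>l\<in>L-{\<alpha>}. if l \<ge> c then V l else 0)"
  proof (intro sum.cong refl)
    fix l assume l: "l \<in> L - {\<alpha>}"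
    show "V l = (if l \<ge> c then V l else 0)"
    proof (cases "l \<ge> c")
      case False
      hence "\<not> V l > 0" using unique[of l \<alpha>] \<alpha> l by auto
      thus ?thesis using nonneg[of l] False by simp
    qed simp
  qed
  also have "\<dots> \<le> (\<Sum>l\<in>L. if l \<ge> c then V l else 0)"
    using fin nonneg by (intro sum_mono2) auto
  finally show ?thesis using \<alpha> high by auto
qed

lemma norm_cis_sum_le: "cmod (\<Sum>l\<in>L. cis (t * l) * complex_of_real (V l)) \<le> (\<Sum>l\<in>L. \<bar>V l\<bar>)"
proof -
  have "cmod (\<Sum>l\<in>L. cis (t * l) * complex_of_real (V l)) \<le> (\<Sum>l\<in>L. cmod (cis (t * l) * complex_of_real (V l)))"
    by (rule norm_sum)
  thus ?thesis by (simp add: norm_mult)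
qed

lemma exists_time_cis_opposite:
  fixes \<alpha> \<beta> :: real
  assumes "\<alpha> \<noteq> \<beta>"
  shows "\<exists>t>0. cis (t * \<beta>) = - cis (t * \<alpha>)"
proof -
  define t where "t = pi / \<bar>\<alpha> - \<beta>\<bar>"
  have "t * (\<beta> - \<alpha>) = pi \<or> t * (\<beta> - \<alpha>) = - pi"
    using assms unfolding t_def by (cases "\<alpha> < \<beta>") (auto simp: field_simps)
  hence "cis (t * (\<beta> - \<alpha>)) = -1" by (auto simp: complex_eq_iff)
  moreover have "cis (t * \<beta>) = cis (t * \<alpha>) * cis (t * (\<beta> - \<alpha>))"
    by (simp add: cis_mult algebra_simps)
  ultimately have "cis (t * \<beta>) = - cis (t * \<alpha>)" by simp
  moreover have "t > 0" unfolding t_def using assms by simp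
  ultimately show ?thesis by blast
qed

text \<open>If \<open>S\<close> and \<open>D\<close> are concentrated, up to \<open>\<delta>\<^sub>1\<close> and \<open>\<delta>\<^sub>2\<close>, at two different frequencies, then
  at a time when these two frequencies are in antiphase the terms \<open>a S\<close> and \<open>- b D\<close> add up.\<close>

lemma cis_sum_antiphase_lower_bound:
  fixes S D :: "real \<Rightarrow> real"
  assumes fin: "finite L" and "\<alpha> \<in> L" "\<beta> \<in> L" "\<alpha> \<noteq> \<beta>"
    and nonneg: "\<And>l. S l \<ge> 0" "\<And>l. D l \<ge> 0" and "a \<ge> 0" "b \<ge> 0"
    and rest: "(\<Sum>l\<in>L-{\<alpha>}. S l) \<le> \<delta>1" "(\<Sum>l\<in>L-{\<beta>}. D l) \<le> \<delta>2"
  shows "\<exists>t>0. cmod (\<Sum>l\<in>L. cis (t * l) * complex_of_real (a * S l - b * D l))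
                \<ge> a * ((\<Sum>l\<in>L. S l) - 2 * \<delta>1) + b * ((\<Sum>l\<in>L. D l) - 2 * \<delta>2)"
proof -
  obtain t where "t > 0" and opp: "cis (t * \<beta>) = - cis (t * \<alpha>)"
    using exists_time_cis_opposite[OF \<open>\<alpha> \<noteq> \<beta>\<close>] by blast
  define R1 where "R1 = (\<Sum>l\<in>L-{\<alpha>}. cis (t * l) * complex_of_real (S l))"
  define R2 where "R2 = (\<Sum>l\<in>L-{\<beta>}. cis (t * l) * complex_of_real (D l))"
  have "(\<Sum>l\<in>L. cis (t * l) * complex_of_real (a * S l - b * D l))
      = a * (\<Sum>l\<in>L. cis (t * l) * complex_of_real (S l)) - b * (\<Sum>l\<in>L. cis (t * l) * complex_of_real (D l))"
    by (simp add: sum_distrib_left sum_subtractf[symmetric] algebra_simps)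
  also have "\<dots> = cis (t * \<alpha>) * complex_of_real (a * S \<alpha> + b * D \<beta>) + (a * R1 - b * R2)"
  proof -
    have SS: "(\<Sum>l\<in>L. cis (t * l) * complex_of_real (S l)) = cis (t * \<alpha>) * complex_of_real (S \<alpha>) + R1"
      unfolding R1_def using fin \<open>\<alpha> \<in> L\<close> by (simp add: sum.remove)
    have DD: "(\<Sum>l\<in>L. cis (t * l) * complex_of_real (D l)) = - cis (t * \<alpha>) * complex_of_real (D \<beta>) + R2"
      unfolding R2_def using fin \<open>\<beta> \<in> L\<close> by (simp add: sum.remove opp)
    show ?thesis unfolding SS DD by (simp add: algebra_simps)
  qed
  finally have split: "(\<Sum>l\<in>L. cis (t * l) * complex_of_real (a * S l - b * D l))
      = cis (t * \<alpha>) * complex_of_real (a * S \<alpha> + b * D \<beta>) + (a * R1 - b * R2)" .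
  have "cmod R1 \<le> \<delta>1" "cmod R2 \<le> \<delta>2"
    using norm_cis_sum_le[of t] nonneg rest unfolding R1_def R2_def by (smt (verit) sum.cong)+
  hence rest_le: "cmod (a * R1 - b * R2) \<le> a * \<delta>1 + b * \<delta>2"
    using \<open>a \<ge> 0\<close> \<open>b \<ge> 0\<close> norm_triangle_ineq4[of "a * R1" "b * R2"]
    by (smt (verit) mult_left_mono norm_mult norm_of_real)
  have main_eq: "cmod (cis (t * \<alpha>) * complex_of_real (a * S \<alpha> + b * D \<beta>)) = a * S \<alpha> + b * D \<beta>"
    using nonneg \<open>a \<ge> 0\<close> \<open>b \<ge> 0\<close> by (simp add: norm_mult del: of_real_add of_real_mult)
  have "(\<Sum>l\<in>L. S l) - \<delta>1 \<le> S \<alpha>"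
    using rest(1) fin \<open>\<alpha> \<in> L\<close> by (simp add: sum.remove)
  moreover have "(\<Sum>l\<in>L. D l) - \<delta>2 \<le> D \<beta>"
    using rest(2) fin \<open>\<beta> \<in> L\<close> by (simp add: sum.remove)
  ultimately have "a * ((\<Sum>l\<in>L. S l) - 2 * \<delta>1) + b * ((\<Sum>l\<in>L. D l) - 2 * \<delta>2)
      \<le> (a * S \<alpha> + b * D \<beta>) - (a * \<delta>1 + b * \<delta>2)"
    using mult_left_mono[of _ _ a] mult_left_mono[of _ _ b] \<open>a \<ge> 0\<close> \<open>b \<ge> 0\<close>
    by (smt (verit) right_diff_distrib)
  also have "\<dots> \<le> cmod (cis (t * \<alpha>) * complex_of_real (a * S \<alpha> + b * D \<beta>)) - cmod (a * R1 - b * R2)"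
    using main_eq rest_le by simp
  also have "\<dots> \<le> cmod (\<Sum>l\<in>L. cis (t * l) * complex_of_real (a * S l - b * D l))"
    unfolding split by (rule norm_diff_ineq)
  finally show ?thesis using \<open>t > 0\<close> by blast
qed

definition ham_re :: "('a \<Rightarrow> 'a \<Rightarrow> bool) \<Rightarrow> 'a set \<Rightarrow> real \<Rightarrow> 'a \<Rightarrow> 'a \<Rightarrow> real" where
  "ham_re E S Q v w = lap E v w - (if v = w then Q * indicator S v else 0)"

lemma ham_eq_ham_re: "ham E S Q v w = complex_of_real (ham_re E S Q v w)"
  by (simp add: ham_def ham_re_def)

definition adj_sum :: "('a \<Rightarrow> 'a \<Rightarrow> bool) \<Rightarrow> ('a \<Rightarrow> real) \<Rightarrow> 'a \<Rightarrow> real" where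
  "adj_sum E f u = (\<Sum>j\<in>{j. E u j}. f j / sqrt (real (deg E u) * real (deg E j)))"

locale three_wells =
  fixes E :: "'a::finite \<Rightarrow> 'a \<Rightarrow> bool" and x y z :: 'a
  assumes simple: "simple_graph E" and connected: "graph_connected E"
    and xy: "x \<noteq> y" and yz: "y \<noteq> z" and xz: "x \<noteq> z"
begin

abbreviation W :: "'a set" where "W \<equiv> {x, y, z}"

abbreviation H :: "real \<Rightarrow> 'a \<Rightarrow> 'a \<Rightarrow> real" where "H Q \<equiv> ham_re E W Q"

definition nverts :: real where "nverts = real CARD('a)"

lemma E_sym: "E a b = E b a" and E_irrefl: "\<not> E a a"
  using simple unfolding simple_graph_def by auto

lemma exists_neighbour: "\<exists>w. E v w"
proof -
  obtain w where w: "w \<noteq> v" using xy by metis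
  have "E\<^sup>*\<^sup>* v w" using connected unfolding graph_connected_def by blast
  thus ?thesis using w by (cases rule: converse_rtranclpE) auto
qed

lemma deg_pos: "real (deg E v) > 0"
proof -
  obtain w where "E v w" using exists_neighbour by blast
  thus ?thesis unfolding deg_def by (auto simp: card_gt_0_iff)
qed

lemma lap_sym: "lap E u v = lap E v u"
  unfolding lap_def using E_sym by (auto simp: mult.commute)

lemma abs_lap_le_1: "\<bar>lap E u v\<bar> \<le> 1"
proof -
  have du: "1 \<le> real (deg E u)" and dv: "1 \<le> real (deg E v)"
    using deg_pos[of u] deg_pos[of v] by simp_all
  have "1 \<le> real (deg E u) * real (deg E v)" using mult_mono[OF du dv] by simp
  hence "1 \<le> sqrt (real (deg E u) * real (deg E v))" by simp
  thus ?thesis unfolding lap_def by (auto simp: abs_div_pos)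
qed

lemma H_sym: "H Q u v = H Q v u"
  unfolding ham_re_def using lap_sym by auto

lemma sum_UNIV_wells: "(\<Sum>u\<in>UNIV. f u) = (\<Sum>u\<in>W. f u) + (\<Sum>u\<in>-W. f u)"
  using sum.union_disjoint[of W "-W" f] by (simp add: Un_absorb)

lemma sum_wells: "(\<Sum>u\<in>W. f u) = f x + f y + f z"
  using xy yz xz by (simp add: add.assoc)

lemma card_ge_3: "nverts \<ge> 3"
proof -
  have "card W = 3" using xy yz xz by auto
  hence "3 \<le> CARD('a)" by (metis card_mono finite subset_UNIV)
  thus ?thesis unfolding nverts_def by simp
qed

lemma matvec_lap: "matvec (lap E) f u = f u - adj_sum E f u"
proof -
  have "matvec (lap E) f u = (\<Sum>j\<in>UNIV. (if j = u then f u else 0)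
      - (if j \<in> {j. E u j} then f j / sqrt (real (deg E u) * real (deg E j)) else 0))"
    unfolding matvec_def lap_def using E_irrefl by (intro sum.cong) auto
  thus ?thesis unfolding adj_sum_def
    using sum.inter_restrict[of UNIV "\<lambda>j. f j / sqrt (real (deg E u) * real (deg E j))" "{j. E u j}"]
    by (simp add: sum_subtractf)
qed

lemma matvec_H: "matvec (H Q) f u = f u - adj_sum E f u - Q * indicator W u * f u"
proof -
  have "matvec (H Q) f u = (\<Sum>j\<in>UNIV. lap E u j * f j - (if j = u then Q * indicator W u * f u else 0))"
    unfolding matvec_def ham_re_def by (intro sum.cong) (auto simp: algebra_simps)
  thus ?thesis by (simp add: sum_subtractf matvec_lap[symmetric] matvec_def)
qed

lemma matvec_lap_sq_le: "(matvec (lap E) f u)\<^sup>2 \<le> nverts * dot f f"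
proof -
  have "(matvec (lap E) f u)\<^sup>2 \<le> (\<Sum>j\<in>UNIV. (lap E u j)\<^sup>2) * (\<Sum>j\<in>UNIV. (f j)\<^sup>2)"
    unfolding matvec_def by (rule Cauchy_Schwarz_ineq_sum)
  also have "\<dots> \<le> nverts * (\<Sum>j\<in>UNIV. (f j)\<^sup>2)"
  proof (rule mult_right_mono)
    have "(\<Sum>j\<in>UNIV. (lap E u j)\<^sup>2) \<le> (\<Sum>j\<in>(UNIV::'a set). 1)"
      using abs_lap_le_1 by (intro sum_mono) (simp add: abs_square_le_1)
    thus "(\<Sum>j\<in>UNIV. (lap E u j)\<^sup>2) \<le> nverts" unfolding nverts_def by simp
  qed (auto intro: sum_nonneg)
  finally show ?thesis by (simp add: dot_def power2_eq_square)
qed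

lemma dot_matvec_lap_le: "dot (matvec (lap E) f) (matvec (lap E) f) \<le> nverts\<^sup>2 * dot f f"
proof -
  have "dot (matvec (lap E) f) (matvec (lap E) f) = (\<Sum>u\<in>UNIV. (matvec (lap E) f u)\<^sup>2)"
    by (simp add: dot_def power2_eq_square)
  also have "\<dots> \<le> (\<Sum>u\<in>(UNIV::'a set). nverts * dot f f)" by (intro sum_mono matvec_lap_sq_le)
  also have "\<dots> = nverts\<^sup>2 * dot f f" by (simp add: nverts_def power2_eq_square)
  finally show ?thesis .
qed

text \<open>Off the wells an eigenvector of \<open>H Q\<close> is one of \<open>\<Delta>\<close>, whose norm is at most \<open>nverts\<close>; so for a
  large eigenvalue most of the mass sits on the wells.\<close>

lemma eigenvector_mass_off_wells:
  assumes eig: "matvec (H Q) g = (\<lambda>i. \<mu> * g i)"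
  shows "(\<mu>\<^sup>2 - nverts\<^sup>2) * (\<Sum>u\<in>-W. (g u)\<^sup>2) \<le> nverts\<^sup>2 * (\<Sum>u\<in>W. (g u)\<^sup>2)"
proof -
  have dot_gg: "dot g g = (\<Sum>u\<in>W. (g u)\<^sup>2) + (\<Sum>u\<in>-W. (g u)\<^sup>2)"
    unfolding dot_def using sum_UNIV_wells[of "\<lambda>u. (g u)\<^sup>2"] by (simp add: power2_eq_square)
  have "\<mu>\<^sup>2 * (g u)\<^sup>2 \<le> nverts * dot g g" if "u \<in> -W" for u
  proof -
    have "\<mu> * g u = matvec (lap E) g u" using fun_cong[OF eig, of u] that
      by (simp add: matvec_H matvec_lap)
    thus ?thesis using matvec_lap_sq_le[of g u] by (simp add: power_mult_distrib[symmetric])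
  qed
  hence "(\<Sum>u\<in>-W. \<mu>\<^sup>2 * (g u)\<^sup>2) \<le> (\<Sum>u\<in>-W. nverts * dot g g)"
    by (intro sum_mono) blast
  hence "\<mu>\<^sup>2 * (\<Sum>u\<in>-W. (g u)\<^sup>2) \<le> (\<Sum>u\<in>-W. nverts * dot g g)"
    by (simp add: sum_distrib_left)
  also have "\<dots> = real (card (-W)) * (nverts * dot g g)" by simp
  also have "\<dots> \<le> nverts * (nverts * dot g g)"
    using dot_self_nonneg[of g] card_ge_3 by (intro mult_right_mono) (simp_all add: nverts_def card_mono)
  finally show ?thesis using dot_gg by (simp add: power2_eq_square algebra_simps)
qed

text \<open>Two eigenvectors with large eigenvalues that agree (nontrivially) on the wells are not
  orthogonal, since by the previous lemma they are mostly supported there.\<close>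

lemma deep_eigenvectors_same_eigenvalue:
  assumes eig1: "matvec (H Q) g1 = (\<lambda>i. \<mu>1 * g1 i)" and eig2: "matvec (H Q) g2 = (\<lambda>i. \<mu>2 * g2 i)"
    and big: "\<mu>1\<^sup>2 > 2 * nverts\<^sup>2" "\<mu>2\<^sup>2 > 2 * nverts\<^sup>2"
    and agree: "\<forall>u\<in>W. g1 u = g2 u" and nonzero: "\<exists>u\<in>W. g1 u \<noteq> 0"
  shows "\<mu>1 = \<mu>2"
proof (rule ccontr)
  assume ne: "\<mu>1 \<noteq> \<mu>2"
  define SW where "SW = (\<Sum>u\<in>W. (g1 u)\<^sup>2)"
  have SW_pos: "SW > 0"
  proof -
    obtain u where "u \<in> W" "g1 u \<noteq> 0" using nonzero by blast
    hence "0 < (g1 u)\<^sup>2" "(g1 u)\<^sup>2 \<le> SW" unfolding SW_def by (auto intro: member_le_sum)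
    thus ?thesis by linarith
  qed
  have off_small: "(\<Sum>u\<in>-W. (g u)\<^sup>2) < SW"
    if "matvec (H Q) g = (\<lambda>i. \<mu> * g i)" "\<mu>\<^sup>2 > 2 * nverts\<^sup>2" "\<forall>u\<in>W. g u = g1 u" for g \<mu>
  proof -
    have "(\<Sum>u\<in>W. (g u)\<^sup>2) = SW" unfolding SW_def using that(3) by (intro sum.cong) auto
    hence "(\<mu>\<^sup>2 - nverts\<^sup>2) * (\<Sum>u\<in>-W. (g u)\<^sup>2) \<le> nverts\<^sup>2 * SW"
      using eigenvector_mass_off_wells[OF that(1)] by simp
    also have "\<dots> < (\<mu>\<^sup>2 - nverts\<^sup>2) * SW" using that(2) SW_pos by (intro mult_strict_right_mono) auto
    finally have "(\<mu>\<^sup>2 - nverts\<^sup>2) * (\<Sum>u\<in>-W. (g u)\<^sup>2) < (\<mu>\<^sup>2 - nverts\<^sup>2) * SW" .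
    moreover have "\<mu>\<^sup>2 - nverts\<^sup>2 > 0" using that(2) zero_le_power2[of nverts] by linarith
    ultimately show ?thesis by (metis mult_less_cancel_left_pos)
  qed
  define off1 off2 where "off1 = (\<Sum>u\<in>-W. (g1 u)\<^sup>2)" and "off2 = (\<Sum>u\<in>-W. (g2 u)\<^sup>2)"
  have "off1 < SW" unfolding off1_def by (rule off_small[OF eig1 big(1)]) simp
  moreover have "off2 < SW" unfolding off2_def by (rule off_small[OF eig2 big(2)]) (simp add: agree)
  moreover have "(\<Sum>u\<in>-W. g1 u * g2 u) \<ge> (\<Sum>u\<in>-W. - ((g1 u)\<^sup>2 + (g2 u)\<^sup>2) / 2)"
  proof (intro sum_mono)
    fix u show "- ((g1 u)\<^sup>2 + (g2 u)\<^sup>2) / 2 \<le> g1 u * g2 u"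
      using sum_squares_ge_zero[of "g1 u + g2 u" 0] by (simp add: power2_eq_square algebra_simps)
  qed
  hence "(\<Sum>u\<in>-W. g1 u * g2 u) \<ge> - (off1 + off2) / 2"
    unfolding off1_def off2_def by (simp only: sum_negf sum.distrib sum_divide_distrib[symmetric] minus_divide_left)
  ultimately have "(\<Sum>u\<in>-W. g1 u * g2 u) > - SW" by (simp add: field_simps)
  moreover have "(\<Sum>u\<in>W. g1 u * g2 u) = SW"
    unfolding SW_def using agree by (intro sum.cong) (auto simp: power2_eq_square)
  ultimately have "dot g1 g2 > 0" unfolding dot_def sum_UNIV_wells[of "\<lambda>u. g1 u * g2 u"] by simp
  thus False using eigenvectors_orthogonal[OF H_sym eig1 eig2 ne] by simp
qed

lemma eigenvector_off_wells:
  assumes "matvec (H Q) \<psi> = (\<lambda>i. \<mu> * \<psi> i)" and "u \<notin> W"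
  shows "(1 - \<mu>) * \<psi> u = adj_sum E \<psi> u"
  using fun_cong[OF assms(1), of u] assms(2) by (simp add: matvec_H algebra_simps)

text \<open>Minimum principle: at a minimum of \<open>\<psi> v / sqrt (deg v)\<close> off the wells, the eigenvalue
  equation \<open>(1 - \<mu>) \<psi> = adj_sum \<psi>\<close> with \<open>1 - \<mu> > 1\<close> forces that minimum to be nonnegative.\<close>

lemma negative_eigenvector_nonneg:
  assumes eig: "matvec (H Q) \<psi> = (\<lambda>i. \<mu> * \<psi> i)" and "\<mu> < 0" and wells: "\<And>v. v \<in> W \<Longrightarrow> \<psi> v \<ge> 0"
  shows "\<psi> u \<ge> 0"
proof (rule ccontr)
  assume "\<not> \<psi> u \<ge> 0"
  hence u: "\<psi> u < 0" "u \<in> -W" using wells by force+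
  define \<phi> where "\<phi> v = \<psi> v / sqrt (real (deg E v))" for v
  define m where "m = Min (\<phi> ` (-W))"
  have "m \<in> \<phi> ` (-W)" unfolding m_def using u(2) by (intro Min_in) auto
  then obtain v where v: "v \<in> -W" "\<phi> v = m" by blast
  have m_le: "m \<le> \<phi> w" if "w \<in> -W" for w unfolding m_def using that by simp
  have "\<phi> u < 0" unfolding \<phi>_def using u(1) deg_pos[of u] by (simp add: divide_neg_pos)
  hence m_neg: "m < 0" using m_le[OF u(2)] by simp
  define s where "s = sqrt (real (deg E v))"
  have s: "s > 0" "s * s = real (deg E v)" unfolding s_def using deg_pos[of v] by simp_all
  have "m / s \<le> \<psi> j / sqrt (real (deg E v) * real (deg E j))" for j
  proof -
    have "m \<le> \<phi> j"
    proof (cases "j \<in> W")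
      case True
      hence "\<phi> j \<ge> 0" unfolding \<phi>_def using wells by simp
      thus ?thesis using m_neg by simp
    qed (simp add: m_le)
    moreover have "\<psi> j / sqrt (real (deg E v) * real (deg E j)) = \<phi> j / s"
      unfolding \<phi>_def s_def by (simp add: real_sqrt_mult)
    ultimately show ?thesis using s(1) by (simp add: divide_right_mono)
  qed
  hence "(\<Sum>j\<in>{j. E v j}. m / s) \<le> adj_sum E \<psi> v" unfolding adj_sum_def by (intro sum_mono)
  moreover have "(\<Sum>j\<in>{j. E v j}. m / s) = s * m" using s by (simp add: deg_def[symmetric] field_simps)
  moreover have "\<psi> v = s * m" using v(2) s(1) unfolding \<phi>_def s_def by (simp add: field_simps)
  moreover have "(1 - \<mu>) * \<psi> v = adj_sum E \<psi> v" using v(1) by (intro eigenvector_off_wells[OF eig]) simp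
  ultimately have "(1 - \<mu>) * (s * m) \<ge> s * m" by simp
  hence "- \<mu> * (s * m) \<ge> 0" by (simp add: algebra_simps)
  moreover have "\<mu> * (s * m) > 0" using \<open>\<mu> < 0\<close> s(1) m_neg by (simp add: mult_neg_neg mult_pos_neg)
  ultimately show False by simp
qed

text \<open>Positivity spreads from \<open>y\<close> along paths avoiding \<open>x\<close> and \<open>z\<close>; by connectivity such a
  path reaches a neighbour of \<open>x\<close>, which contradicts \<open>\<psi> x = 0\<close>.\<close>

lemma no_negative_eigenvector_vanishing_at_x_z:
  assumes eig: "matvec (H Q) \<psi> = (\<lambda>i. \<mu> * \<psi> i)" and "\<mu> < 0"
    and "\<psi> y = 1" "\<psi> x = 0" "\<psi> z = 0"
  shows False
proof -
  have nonneg: "\<psi> u \<ge> 0" for u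
    by (rule negative_eigenvector_nonneg[OF eig \<open>\<mu> < 0\<close>]) (use assms(3-5) in auto)
  have at_zero: "adj_sum E \<psi> u = 0" if "\<psi> u = 0" for u
    using fun_cong[OF eig, of u] that by (simp add: matvec_H)
  have adj_pos: "adj_sum E \<psi> w > 0" if "E w v" "\<psi> v > 0" for v w
  proof -
    have "\<psi> v / sqrt (real (deg E w) * real (deg E v)) > 0" using that(2) deg_pos[of w] deg_pos[of v] by simp
    also have "\<dots> \<le> adj_sum E \<psi> w"
      unfolding adj_sum_def using that(1) nonneg deg_pos by (intro member_le_sum) auto
    finally show ?thesis .
  qed
  define R where "R a b \<longleftrightarrow> (a = y \<or> a \<notin> W) \<and> E a b" for a b
  have reach: "(w \<notin> W \<longrightarrow> \<psi> w > 0) \<and> (w \<in> W \<longrightarrow> w = y)" if "R\<^sup>*\<^sup>* y w" for w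
    using that
  proof (induction rule: rtranclp_induct)
    case base thus ?case by simp
  next
    case (step v w)
    have "v = y \<or> v \<notin> W" "E v w" using step(2) unfolding R_def by auto
    moreover have "\<psi> v > 0" using calculation(1) step(3) \<open>\<psi> y = 1\<close> by auto
    ultimately have adj: "adj_sum E \<psi> w > 0" using adj_pos E_sym by blast
    have "\<psi> w > 0" if "w \<notin> W"
    proof -
      have "(1 - \<mu>) * \<psi> w > 0" using eigenvector_off_wells[OF eig that] adj by simp
      thus ?thesis using \<open>\<mu> < 0\<close> by (simp add: zero_less_mult_iff)
    qed
    moreover have "w = y" if "w \<in> W"
      using that at_zero adj \<open>\<psi> x = 0\<close> \<open>\<psi> z = 0\<close> by force
    ultimately show ?case by blast
  qed
  have "R\<^sup>*\<^sup>* y v" if "E\<^sup>*\<^sup>* y v" for v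
    using that
  proof (induction rule: rtranclp_induct)
    case (step v w)
    hence "R v w" unfolding R_def using reach[OF step(3)] by auto
    thus ?case using step(3) by simp
  qed simp
  hence "R\<^sup>*\<^sup>* y x" using connected unfolding graph_connected_def by blast
  thus False using reach[of x] xy by auto
qed

end

locale cyclic_wells = three_wells +
  fixes \<tau> :: "'a \<Rightarrow> 'a"
  assumes aut: "graph_aut E \<tau>" and tau_x: "\<tau> x = y" and tau_y: "\<tau> y = z" and tau_z: "\<tau> z = x"
begin

lemma bij_tau: "bij \<tau>" and E_tau: "E (\<tau> a) (\<tau> b) = E a b"
  using aut unfolding graph_aut_def by auto

lemma tau_eq_iff: "\<tau> a = \<tau> b \<longleftrightarrow> a = b"
  using bij_is_inj[OF bij_tau] by (simp add: inj_eq)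

lemma deg_tau: "deg E (\<tau> v) = deg E v"
proof -
  have "{w. E (\<tau> v) w} = \<tau> ` {w. E v w}"
    using E_tau bij_tau by (auto simp: image_iff bij_iff) (metis E_tau)
  thus ?thesis unfolding deg_def
    using card_image[OF inj_on_subset[OF bij_is_inj[OF bij_tau] subset_UNIV]] by simp
qed

lemma tau_in_wells_iff: "\<tau> u \<in> W \<longleftrightarrow> u \<in> W"
  using tau_x tau_y tau_z tau_eq_iff by (metis insert_iff singletonD)

lemma H_tau: "H Q (\<tau> u) (\<tau> v) = H Q u v"
  unfolding ham_re_def lap_def using E_tau deg_tau tau_eq_iff tau_in_wells_iff
  by (simp add: indicator_def)

end

locale wells_eigenbasis = cyclic_wells E x y z \<tau> + eigenbasis "ham_re E {x, y, z} Q" B lam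
  for E :: "'a::finite \<Rightarrow> 'a \<Rightarrow> bool" and x y z \<tau> Q B lam
begin

definition p :: "real \<Rightarrow> real" where "p l = eigenkernel l y y"
definition q :: "real \<Rightarrow> real" where "q l = eigenkernel l y z"

text \<open>The rotation \<open>\<tau>\<close> leaves each spectral projection invariant, so on the wells the kernel of the
  projection has one diagonal value \<open>p\<close> and one off-diagonal value \<open>q\<close>.\<close>

lemma eigenkernel_wells:
  "eigenkernel l x x = p l" "eigenkernel l y y = p l" "eigenkernel l z z = p l"
  "eigenkernel l x y = q l" "eigenkernel l y x = q l" "eigenkernel l y z = q l"
  "eigenkernel l z y = q l" "eigenkernel l x z = q l" "eigenkernel l z x = q l"
proof -
  note rot = eigenkernel_symmetry[OF bij_tau H_tau]
  have "eigenkernel l z z = eigenkernel l y y" "eigenkernel l x x = eigenkernel l z z"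
    "eigenkernel l z x = eigenkernel l y z" "eigenkernel l x y = eigenkernel l z x"
    using rot[of l y y] rot[of l z z] rot[of l y z] rot[of l z x] tau_x tau_y tau_z by simp_all
  thus "eigenkernel l x x = p l" "eigenkernel l y y = p l" "eigenkernel l z z = p l"
    "eigenkernel l x y = q l" "eigenkernel l y z = q l" "eigenkernel l z x = q l"
    "eigenkernel l y x = q l" "eigenkernel l z y = q l" "eigenkernel l x z = q l"
    unfolding p_def q_def by (metis eigenkernel_sym)+
qed

definition sw :: "'a \<Rightarrow> real" where "sw = indicator W"
definition dw :: "'a \<Rightarrow> real" where "dw u = indicator {y} u - indicator {z} u"

definition smass :: "real \<Rightarrow> real" where "smass l = (\<Sum>b\<in>basis_at l. (dot b sw)\<^sup>2)"
definition dmass :: "real \<Rightarrow> real" where "dmass l = (\<Sum>b\<in>basis_at l. (dot b dw)\<^sup>2)"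

lemma dot_sw: "dot b sw = b x + b y + b z"
proof -
  have "dot b sw = (\<Sum>u\<in>UNIV. if u \<in> W then b u else 0)"
    unfolding dot_def sw_def by (intro sum.cong) auto
  also have "\<dots> = (\<Sum>u\<in>W. b u)" using sum.inter_restrict[of UNIV b W] by simp
  finally show ?thesis by (simp add: sum_wells)
qed

lemma dot_dw: "dot b dw = b y - b z"
  unfolding dw_def dot_def by (simp add: right_diff_distrib sum_subtractf dot_indicator_right[unfolded dot_def])

lemma smass_eq: "smass l = 3 * p l + 6 * q l"
proof -
  have "smass l = eigenkernel l x x + eigenkernel l y y + eigenkernel l z z
      + 2 * eigenkernel l x y + 2 * eigenkernel l y z + 2 * eigenkernel l x z"
    unfolding smass_def eigenkernel_def dot_sw
    by (simp add: power2_eq_square algebra_simps sum.distrib sum_distrib_left)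
  thus ?thesis by (simp add: eigenkernel_wells)
qed

lemma dmass_eq: "dmass l = 2 * p l - 2 * q l"
proof -
  have "dmass l = eigenkernel l y y + eigenkernel l z z - 2 * eigenkernel l y z"
    unfolding dmass_def eigenkernel_def dot_dw
    by (simp add: power2_eq_square algebra_simps sum.distrib sum_distrib_left sum_subtractf)
  thus ?thesis by (simp add: eigenkernel_wells)
qed

lemma q_eq: "q l = smass l / 9 - dmass l / 6"
  unfolding smass_eq dmass_eq by (simp add: field_simps)

lemma smass_nonneg: "smass l \<ge> 0" and dmass_nonneg: "dmass l \<ge> 0"
  unfolding smass_def dmass_def by (auto intro: sum_nonneg)

lemma dot_sw_sw: "dot sw sw = 3"
  using dot_sw[of sw] xy yz xz by (simp add: sw_def)

lemma dot_dw_dw: "dot dw dw = 2"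
  using dot_dw[of dw] xy yz xz by (simp add: dw_def)

lemma sum_smass: "(\<Sum>l\<in>spectrum. smass l) = 3"
  unfolding smass_def sum_over_spectrum using parseval[of sw sw] dot_sw_sw by (simp add: power2_eq_square)

lemma sum_dmass: "(\<Sum>l\<in>spectrum. dmass l) = 2"
  unfolding dmass_def sum_over_spectrum using parseval[of dw dw] dot_dw_dw by (simp add: power2_eq_square)

lemma evol_y_z: "evol E W Q t y z = (\<Sum>l\<in>spectrum. cis (t * l) * complex_of_real (smass l / 9 - dmass l / 6))"
proof -
  have "evol E W Q t y z = (\<Sum>b\<in>B. cis (t * lam b) * complex_of_real (b y * b z))"
    unfolding evol_def by (rule sums_unique[symmetric], rule exp_series_indicator) (rule ham_eq_ham_re)
  also have "\<dots> = (\<Sum>l\<in>spectrum. \<Sum>b\<in>basis_at l. cis (t * l) * complex_of_real (b y * b z))"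
    by (subst sum_over_spectrum[symmetric]) (intro sum.cong refl, auto)
  also have "\<dots> = (\<Sum>l\<in>spectrum. cis (t * l) * complex_of_real (q l))"
    unfolding q_def eigenkernel_def by (simp add: sum_distrib_left)
  finally show ?thesis by (simp add: q_eq)
qed

lemma norm_evol_y_z_le: "cmod (evol E W Q t y z) \<le> 2/3"
proof -
  have "cmod (evol E W Q t y z) \<le> (\<Sum>l\<in>spectrum. \<bar>smass l / 9 - dmass l / 6\<bar>)"
    unfolding evol_y_z by (rule norm_cis_sum_le)
  also have "\<dots> \<le> (\<Sum>l\<in>spectrum. smass l / 9 + dmass l / 6)"
    using smass_nonneg dmass_nonneg by (intro sum_mono) (simp add: abs_le_iff)
  also have "\<dots> = 2/3" by (simp add: sum.distrib sum_divide_distrib[symmetric] sum_smass sum_dmass)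
  finally show ?thesis .
qed

lemma eigenproj_supported_on_wells:
  assumes "\<And>w. w \<notin> W \<Longrightarrow> f w = 0"
  shows "eigenproj l f u = f x * eigenkernel l u x + f y * eigenkernel l u y + f z * eigenkernel l u z"
proof -
  have "(\<Sum>w\<in>-W. f w * eigenkernel l u w) = 0" using assms by (intro sum.neutral) auto
  thus ?thesis unfolding eigenproj_eq_kernel_sum sum_UNIV_wells[of "\<lambda>w. f w * eigenkernel l u w"]
    by (simp add: sum_wells)
qed

lemma sw_supported: "w \<notin> W \<Longrightarrow> sw w = 0" and dw_supported: "w \<notin> W \<Longrightarrow> dw w = 0"
  unfolding sw_def dw_def by auto

lemma eigenproj_sw_wells: "u \<in> W \<Longrightarrow> eigenproj l sw u = smass l / 3 * sw u"
  using eigenproj_supported_on_wells[where f=sw and l=l and u=u, OF sw_supported] eigenkernel_wells[of l]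
  by (auto simp: sw_def smass_eq)

lemma eigenproj_dw_wells: "u \<in> W \<Longrightarrow> eigenproj l dw u = dmass l / 2 * dw u"
  using eigenproj_supported_on_wells[where f=dw and l=l and u=u, OF dw_supported] eigenkernel_wells[of l] xy yz xz
  by (auto simp: dw_def dmass_eq)

text \<open>For \<open>f\<close> supported on the wells, \<open>\<Delta> f = (H + Q) f\<close>, and \<open>\<Delta>\<close> is bounded; so \<open>f\<close> has
  little mass on eigenvalues above \<open>-Q/2\<close>.\<close>

lemma high_mass_le:
  assumes supp: "\<And>u. u \<notin> W \<Longrightarrow> f u = 0" and "Q > 0"
  shows "(\<Sum>b\<in>B. if lam b \<ge> -Q/2 then (dot b f)\<^sup>2 else 0) \<le> 4 * nverts\<^sup>2 * dot f f / Q\<^sup>2"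
proof -
  have "matvec (lap E) f = (\<lambda>i. matvec (H Q) f i + Q * f i)"
    using supp by (auto simp: matvec_H matvec_lap indicator_def fun_eq_iff)
  hence "dot b (matvec (lap E) f) = (lam b + Q) * dot b f" if "b \<in> B" for b
    using dot_basis_matvec[OF that]
    by (simp add: dot_def sum.distrib sum_distrib_left algebra_simps)
  hence "(\<Sum>b\<in>B. ((lam b + Q) * dot b f)\<^sup>2) = dot (matvec (lap E) f) (matvec (lap E) f)"
    unfolding parseval[of "matvec (lap E) f"] by (intro sum.cong) (auto simp: power2_eq_square)
  also have "\<dots> \<le> nverts\<^sup>2 * dot f f" by (rule dot_matvec_lap_le)
  finally have total: "(\<Sum>b\<in>B. ((lam b + Q) * dot b f)\<^sup>2) \<le> nverts\<^sup>2 * dot f f" .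
  have "(if lam b \<ge> -Q/2 then (dot b f)\<^sup>2 else 0) \<le> 4 / Q\<^sup>2 * ((lam b + Q) * dot b f)\<^sup>2" for b
  proof (cases "lam b \<ge> -Q/2")
    case True
    hence "Q\<^sup>2 \<le> (2 * (lam b + Q))\<^sup>2" using \<open>Q > 0\<close> by (intro power_mono) auto
    hence "Q\<^sup>2 \<le> 4 * (lam b + Q)\<^sup>2" by (simp add: power2_eq_square algebra_simps)
    have "(dot b f)\<^sup>2 = (dot b f)\<^sup>2 * Q\<^sup>2 / Q\<^sup>2" using \<open>Q > 0\<close> by simp
    also have "\<dots> \<le> (dot b f)\<^sup>2 * (4 * (lam b + Q)\<^sup>2) / Q\<^sup>2"
      using \<open>Q\<^sup>2 \<le> 4 * (lam b + Q)\<^sup>2\<close> by (intro divide_right_mono mult_left_mono) auto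
    also have "\<dots> = 4 / Q\<^sup>2 * ((lam b + Q) * dot b f)\<^sup>2" by (simp add: power_mult_distrib)
    finally show ?thesis using True by simp
  qed simp
  hence "(\<Sum>b\<in>B. if lam b \<ge> -Q/2 then (dot b f)\<^sup>2 else 0) \<le> 4 / Q\<^sup>2 * (\<Sum>b\<in>B. ((lam b + Q) * dot b f)\<^sup>2)"
    by (simp add: sum_distrib_left sum_mono)
  also have "\<dots> \<le> 4 / Q\<^sup>2 * (nverts\<^sup>2 * dot f f)" using total by (intro mult_left_mono) auto
  finally show ?thesis by simp
qed

lemma smass_high_le: "Q > 0 \<Longrightarrow> (\<Sum>l\<in>spectrum. if l \<ge> -Q/2 then smass l else 0) \<le> 12 * nverts\<^sup>2 / Q\<^sup>2"
  using high_mass_le[where f=sw, OF sw_supported] dot_sw_sw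
  unfolding smass_def sum_over_spectrum_above by simp

lemma dmass_high_le: "Q > 0 \<Longrightarrow> (\<Sum>l\<in>spectrum. if l \<ge> -Q/2 then dmass l else 0) \<le> 8 * nverts\<^sup>2 / Q\<^sup>2"
  using high_mass_le[where f=dw, OF dw_supported] dot_dw_dw
  unfolding dmass_def sum_over_spectrum_above by simp

lemma deep_levels_eq:
  assumes "Q > 0" "Q\<^sup>2 > 8 * nverts\<^sup>2" "l1 < -Q/2" "l2 < -Q/2"
    and proj: "\<And>u. u \<in> W \<Longrightarrow> eigenproj l1 f u = c1 * f u" "\<And>u. u \<in> W \<Longrightarrow> eigenproj l2 f u = c2 * f u"
    and "c1 \<noteq> 0" "c2 \<noteq> 0" and nonzero: "\<exists>u\<in>W. f u \<noteq> 0"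
  shows "l1 = l2"
proof -
  define g where "g l c = (\<lambda>i. 1 / c * eigenproj l f i)" for l c
  have eig: "matvec (H Q) (g l c) = (\<lambda>i. l * g l c i)" for l c
    unfolding g_def matvec_scale eigenproj_eigenvector by (simp add: mult_ac)
  have big: "l\<^sup>2 > 2 * nverts\<^sup>2" if "l < -Q/2" for l
  proof -
    have "(Q/2)\<^sup>2 \<le> (-l)\<^sup>2" using that \<open>Q > 0\<close> by (intro power_mono) auto
    thus ?thesis using assms(2) by (simp add: power_divide)
  qed
  have "\<forall>u\<in>W. g l1 c1 u = g l2 c2 u" unfolding g_def using proj \<open>c1 \<noteq> 0\<close> \<open>c2 \<noteq> 0\<close> by simp
  moreover have "\<exists>u\<in>W. g l1 c1 u \<noteq> 0" unfolding g_def using proj(1) \<open>c1 \<noteq> 0\<close> nonzero by auto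
  ultimately show ?thesis
    using deep_eigenvectors_same_eigenvalue[OF eig eig big[OF assms(3)] big[OF assms(4)]] by blast
qed

lemma smass_deep_unique:
  assumes "Q > 0" "Q\<^sup>2 > 8 * nverts\<^sup>2" "l1 < -Q/2" "l2 < -Q/2" "smass l1 > 0" "smass l2 > 0"
  shows "l1 = l2"
proof -
  have "sw x \<noteq> 0" by (simp add: sw_def)
  hence "\<exists>u\<in>W. sw u \<noteq> 0" by blast
  thus ?thesis using assms
    by (intro deep_levels_eq[of l1 l2 sw "smass l1 / 3" "smass l2 / 3"]) (auto simp: eigenproj_sw_wells)
qed

lemma dmass_deep_unique:
  assumes "Q > 0" "Q\<^sup>2 > 8 * nverts\<^sup>2" "l1 < -Q/2" "l2 < -Q/2" "dmass l1 > 0" "dmass l2 > 0"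
  shows "l1 = l2"
proof -
  have "\<exists>u\<in>W. dw u \<noteq> 0" using yz by (auto simp: dw_def)
  thus ?thesis using assms
    by (intro deep_levels_eq[of l1 l2 dw "dmass l1 / 2" "dmass l2 / 2"]) (auto simp: eigenproj_dw_wells)
qed

text \<open>If a negative level carried both masses, the vectors \<open>P sw\<close> and \<open>P dw\<close> of its eigenspace
  would be independent on the wells, and a combination of them would vanish at \<open>x\<close> and \<open>z\<close> but
  not at \<open>y\<close>.\<close>

lemma smass_dmass_not_both:
  assumes "l < 0" "smass l > 0" "dmass l > 0"
  shows False
proof -
  define F where "F = p l + 2 * q l"
  define G where "G = p l - q l"
  have FG: "F * G \<noteq> 0" using assms smass_eq[of l] dmass_eq[of l] unfolding F_def G_def by simp
  define a where "a = (p l + q l) / (F * G)"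
  define c where "c = - q l / (F * G)"
  define v where "v u = (if u = y then a else if u = x \<or> u = z then c else 0)" for u
  have v_supp: "w \<notin> W \<Longrightarrow> v w = 0" for w unfolding v_def by auto
  have v_vals: "v x = c" "v y = a" "v z = c" unfolding v_def using xy yz xz by auto
  have "eigenproj l v u = c * eigenkernel l u x + a * eigenkernel l u y + c * eigenkernel l u z" for u
    using eigenproj_supported_on_wells[where f=v, OF v_supp] v_vals by simp
  hence \<psi>: "eigenproj l v y = (c + c) * q l + a * p l" "eigenproj l v x = c * p l + (a + c) * q l"
    "eigenproj l v z = (c + a) * q l + c * p l"
    by (simp_all add: eigenkernel_wells algebra_simps)
  have "eigenproj l v y = 1"
  proof -
    have "eigenproj l v y = (p l * (p l + q l) - 2 * q l * q l) / (F * G)"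
      using \<psi>(1) FG unfolding a_def c_def by (simp add: field_simps)
    also have "\<dots> = 1" using FG unfolding F_def G_def by (simp add: field_simps)
    finally show ?thesis .
  qed
  moreover have "eigenproj l v x = 0" "eigenproj l v z = 0"
    using \<psi>(2,3) FG unfolding a_def c_def by (simp_all add: field_simps)
  ultimately show False
    using no_negative_eigenvector_vanishing_at_x_z[OF eigenproj_eigenvector \<open>l < 0\<close>] by blast
qed

lemma norm_evol_y_z_lower:
  assumes "Q \<ge> 3 * nverts"
  shows "\<exists>t>0. cmod (evol E W Q t y z) \<ge> 2/3 - 16 * nverts\<^sup>2 / (3 * Q\<^sup>2)"
proof -
  have "Q > 0" using assms card_ge_3 by simp
  have "9 * nverts\<^sup>2 \<le> Q\<^sup>2" using power_mono[OF assms, of 2] card_ge_3 by (simp add: power_mult_distrib)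
  moreover have "nverts\<^sup>2 > 0" using card_ge_3 by simp
  ultimately have Q8: "Q\<^sup>2 > 8 * nverts\<^sup>2" and Q4: "Q\<^sup>2 > 4 * nverts\<^sup>2" by linarith+
  define \<delta>1 \<delta>2 where "\<delta>1 = 12 * nverts\<^sup>2 / Q\<^sup>2" and "\<delta>2 = 8 * nverts\<^sup>2 / Q\<^sup>2"
  have "\<delta>1 < 3" "\<delta>2 < 2" unfolding \<delta>1_def \<delta>2_def using Q4 \<open>Q > 0\<close> by (simp_all add: field_simps)
  obtain \<alpha> where \<alpha>: "\<alpha> \<in> spectrum" "\<alpha> < -Q/2" "smass \<alpha> > 0" "(\<Sum>l\<in>spectrum-{\<alpha>}. smass l) \<le> \<delta>1"
    using single_dominant_level[of spectrum smass 3 "-Q/2" \<delta>1] finite_basis smass_nonneg sum_smass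
      smass_high_le[OF \<open>Q > 0\<close>] \<open>\<delta>1 < 3\<close> smass_deep_unique[OF \<open>Q > 0\<close> Q8] \<delta>1_def by blast
  obtain \<beta> where \<beta>: "\<beta> \<in> spectrum" "\<beta> < -Q/2" "dmass \<beta> > 0" "(\<Sum>l\<in>spectrum-{\<beta>}. dmass l) \<le> \<delta>2"
    using single_dominant_level[of spectrum dmass 2 "-Q/2" \<delta>2] finite_basis dmass_nonneg sum_dmass
      dmass_high_le[OF \<open>Q > 0\<close>] \<open>\<delta>2 < 2\<close> dmass_deep_unique[OF \<open>Q > 0\<close> Q8] \<delta>2_def by blast
  have "\<alpha> \<noteq> \<beta>" using smass_dmass_not_both[of \<alpha>] \<alpha> \<beta> \<open>Q > 0\<close> by force
  then obtain t where "t > 0" and lower: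
    "cmod (\<Sum>l\<in>spectrum. cis (t * l) * complex_of_real (1/9 * smass l - 1/6 * dmass l))
       \<ge> 1/9 * (3 - 2 * \<delta>1) + 1/6 * (2 - 2 * \<delta>2)"
    using cis_sum_antiphase_lower_bound[of spectrum \<alpha> \<beta> smass dmass "1/9" "1/6" \<delta>1 \<delta>2]
      finite_basis \<alpha> \<beta> smass_nonneg dmass_nonneg sum_smass sum_dmass by auto
  have "1/9 * (3 - 2 * \<delta>1) + 1/6 * (2 - 2 * \<delta>2) = 2/3 - 16 * nverts\<^sup>2 / (3 * Q\<^sup>2)"
    unfolding \<delta>1_def \<delta>2_def using \<open>Q > 0\<close> by (simp add: field_simps)
  thus ?thesis using lower \<open>t > 0\<close> unfolding evol_y_z by auto
qed

end

context cyclic_wells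
begin

lemma exists_wells_eigenbasis: "\<exists>B lam. wells_eigenbasis E x y z \<tau> Q B lam"
  using symmetric_matrix_eigenbasis[of "H Q", OF H_sym] cyclic_wells_axioms
  unfolding wells_eigenbasis_def by blast

lemma sup_norm_evol_y_z_le: "(SUP t\<in>{0..}. ereal ((cmod (evol E W Q t y z))\<^sup>2)) \<le> ereal (4/9)"
proof (rule SUP_least)
  fix t
  obtain B lam where "wells_eigenbasis E x y z \<tau> Q B lam" using exists_wells_eigenbasis by blast
  hence "cmod (evol E W Q t y z) \<le> 2/3" by (rule wells_eigenbasis.norm_evol_y_z_le)
  hence "(cmod (evol E W Q t y z))\<^sup>2 \<le> (2/3)\<^sup>2" by (intro power_mono) auto
  thus "ereal ((cmod (evol E W Q t y z))\<^sup>2) \<le> ereal (4/9)" by (simp add: power2_eq_square)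
qed

lemma sup_norm_evol_y_z_lower:
  assumes Q3: "Q \<ge> 3 * nverts"
  shows "ereal ((2/3 - 16 * nverts\<^sup>2 / (3 * Q\<^sup>2))\<^sup>2) \<le> (SUP t\<in>{0..}. ereal ((cmod (evol E W Q t y z))\<^sup>2))"
proof -
  define d where "d = 16 * nverts\<^sup>2 / (3 * Q\<^sup>2)"
  obtain B lam where basis: "wells_eigenbasis E x y z \<tau> Q B lam" using exists_wells_eigenbasis by blast
  obtain t where "t > 0" and t: "cmod (evol E W Q t y z) \<ge> 2/3 - d"
    using wells_eigenbasis.norm_evol_y_z_lower[OF basis Q3] unfolding d_def by blast
  have "(3 * nverts)\<^sup>2 \<le> Q\<^sup>2" using Q3 card_ge_3 by (intro power_mono) auto
  hence "9 * nverts\<^sup>2 \<le> Q\<^sup>2" by (simp add: power_mult_distrib)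
  hence "16 * nverts\<^sup>2 \<le> 2/3 * (3 * Q\<^sup>2)" using zero_le_power2[of nverts] by linarith
  moreover have "Q > 0" using Q3 card_ge_3 by simp
  ultimately have "d \<le> 2/3" unfolding d_def by (simp add: divide_le_eq)
  hence "(2/3 - d)\<^sup>2 \<le> (cmod (evol E W Q t y z))\<^sup>2" using t by (intro power_mono) auto
  also have "ereal \<dots> \<le> (SUP t\<in>{0..}. ereal ((cmod (evol E W Q t y z))\<^sup>2))"
    using \<open>t > 0\<close> by (intro SUP_upper) auto
  finally show ?thesis unfolding d_def by simp
qed

lemma TC_y_z: "TC E W y z = ereal (4/9)"
proof -
  define f where "f Q = (SUP t\<in>{0..}. ereal ((cmod (evol E W Q t y z))\<^sup>2))" for Q
  define g where "g Q = ereal ((2/3 - 16 * nverts\<^sup>2 / (3 * Q\<^sup>2))\<^sup>2)" for Q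
  have "((\<lambda>Q. 16 * nverts\<^sup>2 / (3 * Q\<^sup>2)) \<longlongrightarrow> 0) at_top" by real_asymp
  moreover have sq: "(2/3 - 0)\<^sup>2 = (4/9 :: real)" by (simp add: power2_eq_square)
  ultimately have "(g \<longlongrightarrow> ereal (4/9)) at_top"
    unfolding g_def using tendsto_ereal[OF tendsto_power[OF tendsto_diff[OF tendsto_const]]]
    by (metis sq)
  moreover have "eventually (\<lambda>Q. g Q \<le> f Q) at_top"
    unfolding eventually_at_top_linorder f_def g_def using sup_norm_evol_y_z_lower by blast
  moreover have "eventually (\<lambda>Q. f Q \<le> ereal (4/9)) at_top"
    unfolding f_def using sup_norm_evol_y_z_le by simp
  ultimately have "(f \<longlongrightarrow> ereal (4/9)) at_top" using tendsto_sandwich[OF _ _ _ tendsto_const] by blast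
  hence "Liminf at_top f = ereal (4/9)" by (intro lim_imp_Liminf) simp_all
  thus ?thesis unfolding TC_def f_def by simp
qed

end

theorem lemma5:
  fixes E :: "'a::finite \<Rightarrow> 'a \<Rightarrow> bool" and x y z :: 'a and \<sigma> :: "'a \<Rightarrow> 'a"
  assumes "simple_graph E" and "graph_connected E"
    and "x \<noteq> y" and "y \<noteq> z" and "x \<noteq> z"
    and "graph_aut E \<sigma>" and "\<sigma> \<circ> \<sigma> \<circ> \<sigma> = id" and "\<sigma> \<noteq> id"
    and "(\<sigma> x = y \<and> \<sigma> y = z \<and> \<sigma> z = x) \<or> (\<sigma> x = z \<and> \<sigma> z = y \<and> \<sigma> y = x)"
  shows "TC E {x, y, z} y z \<noteq> 1 \<and> TC E {x, y, z} y z = ereal (4/9)"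
proof -
  text \<open>Only the action of \<open>\<sigma>\<close> on the wells matters.
    If \<open>\<sigma>\<close> rotates the wells the other way, \<open>\<sigma> \<circ> \<sigma>\<close> rotates them as \<open>x \<mapsto> y \<mapsto> z\<close>.\<close>
  obtain \<tau> where "graph_aut E \<tau>" "\<tau> x = y" "\<tau> y = z" "\<tau> z = x"
  proof (cases "\<sigma> x = y")
    case False
    hence "\<sigma> x = z" "\<sigma> z = y" "\<sigma> y = x" using assms(9) by auto
    moreover have "graph_aut E (\<sigma> \<circ> \<sigma>)"
      using assms(6) unfolding graph_aut_def by (auto intro: bij_comp)
    ultimately show ?thesis using that[of "\<sigma> \<circ> \<sigma>"] by simp
  qed (use that assms(6,9) in blast)
  then interpret cyclic_wells E x y z \<tau>
    using assms(1-5) by unfold_locales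
  show ?thesis using TC_y_z by (simp add: one_ereal_def)
qed

end
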